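(* Let $H$ be a digraph (possibly with loops) and let $D$ be an $H$-colored semicomplete digraph in which every directed $3$-cycle is an $H$-cycle. If $k \geq 2$, then $D$ has a $(k,H)$-kernel.
   Context: All digraphs are finite. A digraph is semicomplete if every two distinct vertices are joined by at least one arc. $D$ has no loops and comes with a map $\rho: A(D)\to V(H)$. For a walk $W=(x_0,\ldots,x_n)$ in $D$, there is an obstruction on $x_i$ if $(\rho(x_{i-1},x_i),\rho(x_i,x_{i+1})) \notin A(H)$; for an open walk this is considered at internal vertices $x_i$, $1\le i\le n-1$, for a closed walk at all $i\in\{0,\ldots,n-1\}$ with indices modulo $n$. $O_H(W)$ is the set of indices with an obstruction; the $H$-length is $l_H(W)=|O_H(W)|+1$ for open $W$ and $|O_H(W)|$ for closed $W$. An $H$-cycle is a directed cycle with no obstructions (the consecutive colours of its arcs, cyclically, form a closed walk in $H$). A $(k,H)$-kernel ($k\ge2$) is a set $S\subseteq V(D)$ such that for every two distinct $u,v\in S$ every directed $uv$-path in $D$ has $H$-length at least $k$, and for every $x\in V(D)\setminus S$ there is a directed path from $x$ to a vertex of $S$ of $H$-length at most $k-1$. *)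

theory Defs
  imports Main
begin

definition digraph :: "'a set \<Rightarrow> ('a \<times> 'a) set \<Rightarrow> bool" where
  "digraph V A \<longleftrightarrow> finite V \<and> A \<subseteq> V \<times> V"

definition loopless :: "('a \<times> 'a) set \<Rightarrow> bool" where
  "loopless A \<longleftrightarrow> (\<forall>x. (x, x) \<notin> A)"

definition H_colouring :: "('a \<times> 'a) set \<Rightarrow> 'c set \<Rightarrow> ('a \<times> 'a \<Rightarrow> 'c) \<Rightarrow> bool" where
  "H_colouring AD VH rho \<longleftrightarrow> (\<forall>e\<in>AD. rho e \<in> VH)"

definition semicomplete :: "'a set \<Rightarrow> ('a \<times> 'a) set \<Rightarrow> bool" where
  "semicomplete V A \<longleftrightarrow> (\<forall>u\<in>V. \<forall>v\<in>V. u \<noteq> v \<longrightarrow> (u, v) \<in> A \<or> (v, u) \<in> A)"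

definition dpath :: "('a \<times> 'a) set \<Rightarrow> 'a list \<Rightarrow> bool" where
  "dpath A p \<longleftrightarrow> p \<noteq> [] \<and> distinct p \<and> (\<forall>i. Suc i < length p \<longrightarrow> (p ! i, p ! Suc i) \<in> A)"

definition obstr_open :: "('a \<times> 'a \<Rightarrow> 'c) \<Rightarrow> ('c \<times> 'c) set \<Rightarrow> 'a list \<Rightarrow> nat \<Rightarrow> bool" where
  "obstr_open rho AH p i \<longleftrightarrow>
     (rho (p ! (i - 1), p ! i), rho (p ! i, p ! (i + 1))) \<notin> AH"

definition H_length :: "('a \<times> 'a \<Rightarrow> 'c) \<Rightarrow> ('c \<times> 'c) set \<Rightarrow> 'a list \<Rightarrow> nat" where
  "H_length rho AH p = card {i. 1 \<le> i \<and> i + 1 < length p \<and> obstr_open rho AH p i} + 1"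

definition dcycle :: "('a \<times> 'a) set \<Rightarrow> 'a list \<Rightarrow> bool" where
  "dcycle A c \<longleftrightarrow> length c \<ge> 2 \<and> distinct c \<and>
     (\<forall>i < length c. (c ! i, c ! ((i + 1) mod length c)) \<in> A)"

definition obstr_closed :: "('a \<times> 'a \<Rightarrow> 'c) \<Rightarrow> ('c \<times> 'c) set \<Rightarrow> 'a list \<Rightarrow> nat \<Rightarrow> bool" where
  "obstr_closed rho AH c i \<longleftrightarrow>
     (let n = length c in
       (rho (c ! ((i + n - 1) mod n), c ! i), rho (c ! i, c ! ((i + 1) mod n))) \<notin> AH)"

definition H_cycle :: "('a \<times> 'a) set \<Rightarrow> ('a \<times> 'a \<Rightarrow> 'c) \<Rightarrow> ('c \<times> 'c) set \<Rightarrow> 'a list \<Rightarrow> bool" where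
  "H_cycle AD rho AH c \<longleftrightarrow> dcycle AD c \<and> (\<forall>i < length c. \<not> obstr_closed rho AH c i)"

definition kH_kernel :: "'a set \<Rightarrow> ('a \<times> 'a) set \<Rightarrow> ('a \<times> 'a \<Rightarrow> 'c) \<Rightarrow> ('c \<times> 'c) set
    \<Rightarrow> nat \<Rightarrow> 'a set \<Rightarrow> bool" where
  "kH_kernel VD AD rho AH k S \<longleftrightarrow> S \<subseteq> VD \<and>
     (\<forall>u\<in>S. \<forall>v\<in>S. u \<noteq> v \<longrightarrow>
        (\<forall>p. dpath AD p \<and> hd p = u \<and> last p = v \<longrightarrow> H_length rho AH p \<ge> k)) \<and>
     (\<forall>x\<in>VD - S. \<exists>p. dpath AD p \<and> hd p = x \<and> last p \<in> S \<and> H_length rho AH p \<le> k - 1)"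

end

(* A single vertex v is a (k,H)-kernel as soon as every other vertex reaches it by an
   H-path, i.e. a path without obstructions, because such a path has H-length 1 < k.
   Such a vertex exists: adding the vertices one at a time, keep a vertex v that all
   vertices added so far reach by H-paths.  If a new vertex z has no H-path to v, then
   every earlier vertex y has an arc to z, and z takes over the role of v.  That arc is
   found by induction along an H-path P from y to v: if z has no H-path to v through P
   and the successor b of y on P has an arc to z, then y -> z, for otherwise
   z -> y -> b -> z is a 3-cycle, hence an H-cycle, and putting z in front of P would
   give an H-path from z to v. *)
theory Submission
  imports Defs
begin

definition H_path :: "('a \<times> 'a) set \<Rightarrow> ('a \<times> 'a \<Rightarrow> 'c) \<Rightarrow> ('c \<times> 'c) set \<Rightarrow> 'a list \<Rightarrow> bool" where
  "H_path A rho AH p \<longleftrightarrow>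
     dpath A p \<and> (\<forall>i. 1 \<le> i \<longrightarrow> i + 1 < length p \<longrightarrow> \<not> obstr_open rho AH p i)"

definition H_reaches :: "('a \<times> 'a) set \<Rightarrow> ('a \<times> 'a \<Rightarrow> 'c) \<Rightarrow> ('c \<times> 'c) set \<Rightarrow> 'a set
    \<Rightarrow> 'a \<Rightarrow> 'a \<Rightarrow> bool" where
  "H_reaches A rho AH W x y \<longleftrightarrow>
     (\<exists>p. H_path A rho AH p \<and> hd p = x \<and> last p = y \<and> set p \<subseteq> W)"

lemma dpath_singleton: "dpath A [x]"
  unfolding dpath_def by simp

lemma dpath_Cons:
  assumes "p \<noteq> []"
  shows "dpath A (z # p) \<longleftrightarrow> z \<notin> set p \<and> (z, hd p) \<in> A \<and> dpath A p"
proof -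
  have "(\<forall>i. Suc i < length (z # p) \<longrightarrow> ((z # p) ! i, (z # p) ! Suc i) \<in> A) \<longleftrightarrow>
        (z, hd p) \<in> A \<and> (\<forall>i. Suc i < length p \<longrightarrow> (p ! i, p ! Suc i) \<in> A)"
    using assms by (auto simp: hd_conv_nth nth_Cons split: nat.splits)
  then show ?thesis
    using assms unfolding dpath_def by auto
qed

lemma obstr_open_Cons: "1 \<le> i \<Longrightarrow> obstr_open rho AH (x # p) (Suc i) = obstr_open rho AH p i"
  unfolding obstr_open_def by (cases i) auto

lemma H_path_singleton: "H_path A rho AH [x]"
  unfolding H_path_def by (simp add: dpath_singleton)

lemma H_path_not_Nil: "H_path A rho AH p \<Longrightarrow> p \<noteq> []"
  unfolding H_path_def dpath_def by simp

lemma H_path_two: "(x, y) \<in> A \<Longrightarrow> x \<noteq> y \<Longrightarrow> H_path A rho AH [x, y]"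
  unfolding H_path_def using dpath_Cons[of "[y]" A x] dpath_singleton[of A y] by auto

lemma H_path_Cons_Cons:
  "H_path A rho AH (z # a # p) \<longleftrightarrow>
     z \<notin> set (a # p) \<and> (z, a) \<in> A \<and> H_path A rho AH (a # p) \<and>
     (p \<noteq> [] \<longrightarrow> (rho (z, a), rho (a, hd p)) \<in> AH)"
proof -
  have obstr_at_1: "obstr_open rho AH (z # a # p) 1 \<longleftrightarrow> (rho (z, a), rho (a, hd p)) \<notin> AH"
    if "p \<noteq> []"
    using that unfolding obstr_open_def by (simp add: hd_conv_nth)
  have "(\<forall>i. 1 \<le> i \<longrightarrow> i + 1 < length (z # a # p) \<longrightarrow> \<not> obstr_open rho AH (z # a # p) i) \<longleftrightarrow>
        (p \<noteq> [] \<longrightarrow> \<not> obstr_open rho AH (z # a # p) 1) \<and>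
        (\<forall>i. 1 \<le> i \<longrightarrow> i + 1 < length (a # p) \<longrightarrow> \<not> obstr_open rho AH (a # p) i)"
    (is "?all \<longleftrightarrow> _")
  proof
    assume ?all
    then show "(p \<noteq> [] \<longrightarrow> \<not> obstr_open rho AH (z # a # p) 1) \<and>
        (\<forall>i. 1 \<le> i \<longrightarrow> i + 1 < length (a # p) \<longrightarrow> \<not> obstr_open rho AH (a # p) i)"
      using obstr_open_Cons[of _ rho AH z "a # p"] by (auto dest: spec[of _ "Suc _"])
  next
    assume rest: "(p \<noteq> [] \<longrightarrow> \<not> obstr_open rho AH (z # a # p) 1) \<and>
        (\<forall>i. 1 \<le> i \<longrightarrow> i + 1 < length (a # p) \<longrightarrow> \<not> obstr_open rho AH (a # p) i)"
    show ?all
    proof (intro allI impI)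
      fix i assume i: "1 \<le> i" "i + 1 < length (z # a # p)"
      show "\<not> obstr_open rho AH (z # a # p) i"
      proof (cases "i = 1")
        case True then show ?thesis using rest i by auto
      next
        case False
        then obtain j where "i = Suc j" "1 \<le> j" using i by (cases i) auto
        then show ?thesis using rest i obstr_open_Cons by fastforce
      qed
    qed
  qed
  then show ?thesis
    unfolding H_path_def using dpath_Cons[of "a # p" A z] obstr_at_1 by auto
qed

lemma dcycle_3:
  "dcycle A [x, y, z] \<longleftrightarrow> distinct [x, y, z] \<and> (x, y) \<in> A \<and> (y, z) \<in> A \<and> (z, x) \<in> A"
  unfolding dcycle_def by (auto simp: less_Suc_eq)

lemma H_cycle_3_no_obstruction:
  "H_cycle A rho AH [x, y, z] \<Longrightarrow> (rho (x, y), rho (y, z)) \<in> AH"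
  unfolding H_cycle_def obstr_closed_def by (auto dest: spec[of _ 1])

lemma H_path_Cons_triangle:
  assumes cyc: "\<And>c. dcycle A c \<Longrightarrow> length c = 3 \<Longrightarrow> H_cycle A rho AH c"
    and "H_path A rho AH (a # b # r)" "z \<notin> set (a # b # r)" "(z, a) \<in> A" "(b, z) \<in> A"
  shows "H_path A rho AH (z # a # b # r)"
proof -
  have "dcycle A [z, a, b]"
    using assms(2-5) by (simp add: dcycle_3 H_path_Cons_Cons)
  then have "(rho (z, a), rho (a, b)) \<in> AH"
    using cyc[of "[z, a, b]"] H_cycle_3_no_obstruction by simp
  then show ?thesis
    using assms(2-4) by (simp add: H_path_Cons_Cons)
qed

lemma H_length_H_path:
  assumes "H_path A rho AH p"
  shows "H_length rho AH p = 1"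
proof -
  have "{i. 1 \<le> i \<and> i + 1 < length p \<and> obstr_open rho AH p i} = {}"
    using assms unfolding H_path_def by auto
  then show ?thesis
    unfolding H_length_def by (metis card.empty add_0)
qed

lemma H_reaches_mono: "H_reaches A rho AH W x y \<Longrightarrow> W \<subseteq> W' \<Longrightarrow> H_reaches A rho AH W' x y"
  unfolding H_reaches_def by blast

lemma H_reaches_refl: "x \<in> W \<Longrightarrow> H_reaches A rho AH W x x"
  unfolding H_reaches_def using H_path_singleton by (auto intro!: exI[of _ "[x]"])

lemma H_reaches_arc: "(x, y) \<in> A \<Longrightarrow> x \<noteq> y \<Longrightarrow> x \<in> W \<Longrightarrow> y \<in> W \<Longrightarrow> H_reaches A rho AH W x y"
  unfolding H_reaches_def using H_path_two by (auto intro!: exI[of _ "[x, y]"])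

lemma H_reaches_or_arc_into:
  assumes sc: "semicomplete VD AD"
    and cyc: "\<And>c. dcycle AD c \<Longrightarrow> length c = 3 \<Longrightarrow> H_cycle AD rho AH c"
    and P: "H_path AD rho AH P" "set P \<subseteq> VD"
    and z: "z \<in> VD" "z \<notin> set P"
  shows "H_reaches AD rho AH (insert z (set P)) z (last P) \<or> (hd P, z) \<in> AD"
  using P z(2)
proof (induction P)
  case Nil then show ?case using H_path_not_Nil by blast
next
  case (Cons a P')
  have "a \<in> VD" "z \<noteq> a"
    using Cons.prems by auto
  then have za_or_az: "(z, a) \<in> AD \<or> (a, z) \<in> AD"
    using sc z(1) unfolding semicomplete_def by blast
  show ?case
  proof (cases "P' = []")
    case True
    have "H_reaches AD rho AH {z, a} z a" if "(z, a) \<in> AD"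
      using that \<open>z \<noteq> a\<close> by (simp add: H_reaches_arc)
    then show ?thesis
      using za_or_az True by auto
  next
    case False
    then obtain b r where P'_eq: "P' = b # r"
      by (cases P') auto
    have P': "H_path AD rho AH P'"
      using Cons.prems(1) P'_eq by (simp add: H_path_Cons_Cons)
    have "H_reaches AD rho AH (insert z (set P')) z (last P') \<or> (b, z) \<in> AD"
      using Cons.IH[OF P'] Cons.prems P'_eq by simp
    then show ?thesis
    proof
      assume "H_reaches AD rho AH (insert z (set P')) z (last P')"
      then have "H_reaches AD rho AH (insert z (set (a # P'))) z (last P')"
        by (rule H_reaches_mono) auto
      then show ?thesis
        using P'_eq by simp
    next
      assume bz: "(b, z) \<in> AD"
      show ?thesis
        using za_or_az
      proof
        assume "(z, a) \<in> AD"
        then have "H_path AD rho AH (z # a # b # r)"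
          using H_path_Cons_triangle[OF cyc] Cons.prems bz P'_eq by blast
        then show ?thesis
          unfolding H_reaches_def by (intro disjI1 exI[of _ "z # a # b # r"]) (auto simp: P'_eq)
      qed simp
    qed
  qed
qed

lemma semicomplete_H_sink:
  assumes sc: "semicomplete VD AD"
    and cyc: "\<And>c. dcycle AD c \<Longrightarrow> length c = 3 \<Longrightarrow> H_cycle AD rho AH c"
    and W: "finite W" "W \<subseteq> VD" "W \<noteq> {}"
  shows "\<exists>v\<in>W. \<forall>y\<in>W. H_reaches AD rho AH W y v"
  using W
proof (induction W rule: finite_induct)
  case empty then show ?case by simp
next
  case (insert z W)
  show ?case
  proof (cases "W = {}")
    case True
    then show ?thesis by (simp add: H_reaches_refl)
  next
    case False
    then obtain v where v: "v \<in> W" and sink: "\<forall>y\<in>W. H_reaches AD rho AH W y v"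
      using insert by auto
    show ?thesis
    proof (cases "H_reaches AD rho AH (insert z W) z v")
      case True
      have "H_reaches AD rho AH (insert z W) y v" if "y \<in> W" for y
        using sink that by (meson H_reaches_mono subset_insertI)
      then show ?thesis
        using True v by blast
    next
      case z_not_reaches: False
      have "(y, z) \<in> AD" if y: "y \<in> W" for y
      proof -
        obtain p where p: "H_path AD rho AH p" "hd p = y" "last p = v" "set p \<subseteq> W"
          using sink y unfolding H_reaches_def by blast
        have "insert z (set p) \<subseteq> insert z W"
          using p(4) by blast
        then have "\<not> H_reaches AD rho AH (insert z (set p)) z (last p)"
          using z_not_reaches p(3) by (metis H_reaches_mono)
        moreover have "set p \<subseteq> VD" "z \<in> VD" "z \<notin> set p"
          using p(4) insert by auto
        ultimately show ?thesis
          using H_reaches_or_arc_into[OF sc cyc p(1)] p(2) by blast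
      qed
      then have "H_reaches AD rho AH (insert z W) y z" if "y \<in> insert z W" for y
        using that insert.hyps(2) by (auto intro: H_reaches_refl H_reaches_arc)
      then show ?thesis
        by blast
    qed
  qed
qed

lemma kH_kernel_singleton:
  assumes "v \<in> VD" "\<forall>x\<in>VD. H_reaches AD rho AH VD x v" "k \<ge> 2"
  shows "kH_kernel VD AD rho AH k {v}"
  unfolding kH_kernel_def
proof (intro conjI ballI)
  fix x assume "x \<in> VD - {v}"
  then obtain p where p: "H_path AD rho AH p" "hd p = x" "last p = v"
    using assms(2) unfolding H_reaches_def by blast
  have "dpath AD p"
    using p(1) unfolding H_path_def by blast
  moreover have "H_length rho AH p = 1"
    using p(1) by (rule H_length_H_path)
  ultimately show "\<exists>p. dpath AD p \<and> hd p = x \<and> last p \<in> {v} \<and> H_length rho AH p \<le> k - 1"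
    using p assms(3) by auto
qed (use assms(1) in auto)

theorem theorem7:
  fixes VD :: "'a set" and AD :: "('a \<times> 'a) set"
    and VH :: "'c set" and AH :: "('c \<times> 'c) set"
    and rho :: "'a \<times> 'a \<Rightarrow> 'c" and k :: nat
  assumes "digraph VD AD" and "loopless AD"
    and "digraph VH AH"
    and "H_colouring AD VH rho"
    and "semicomplete VD AD"
    and "\<And>c. dcycle AD c \<Longrightarrow> length c = 3 \<Longrightarrow> H_cycle AD rho AH c"
    and "k \<ge> 2"
  shows "\<exists>S. kH_kernel VD AD rho AH k S"
proof (cases "VD = {}")
  case True
  then show ?thesis unfolding kH_kernel_def by auto
next
  case False
  have "finite VD" using assms(1) unfolding digraph_def by simp
  then obtain v where "v \<in> VD" "\<forall>x\<in>VD. H_reaches AD rho AH VD x v"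
    using semicomplete_H_sink[OF assms(5,6)] False by blast
  then have "kH_kernel VD AD rho AH k {v}"
    using assms(7) by (rule kH_kernel_singleton)
  then show ?thesis ..
qed

end
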